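(* Let $P$ be a finite poset and let $P'$ be a poset with $P\subseteq P'\subseteq S_N(S_N(P))$ (as induced subposets). Then $N_{diag}(P')\subseteq N_{diag}(P)\cup A(P)$.
   Context: For a poset $P$, $x\prec y$ means $x<y$ with no $z$ satisfying $x<z<y$; $\mathrm{Diag}(P)$ is the set of covering pairs $(x,y)$, and $\mathrm{Inc}(P)$ the set of pairs of incomparable elements. Four elements $a,b,c,d$ form an $N$ in $P$ if $b\prec c$, $a\prec c$, $b\prec d$ and $(a,d)\in\mathrm{Inc}(P)$; $(b,c)$ is the diagonal edge of this $N$. $N_{diag}(P)$ is the set of diagonal edges of all $N$'s in $P$. $S_N(P)$ is the poset obtained from $P$ by adding one new (dummy) vertex $u$ on each edge $(b,c)\in N_{diag}(P)$ (so that $b\prec u\prec c$), with the induced order; thus $P\subseteq S_N(P)\subseteq S_N(S_N(P))$. $A(P)$ is the set of pairs $(b,c)\in\mathrm{Diag}(P)\setminus N_{diag}(P)$ for which there exist $a,d\in P$ with $a<c$, $b<d$, $(a,b),(c,d)\in\mathrm{Inc}(P)$, and either $(a,c)\in N_{diag}(P)$ or $(b,d)\in N_{diag}(P)$. *)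

theory Defs
  imports Main
begin

definition is_poset :: "'a set \<Rightarrow> ('a \<Rightarrow> 'a \<Rightarrow> bool) \<Rightarrow> bool" where
  "is_poset V le \<longleftrightarrow>
     (\<forall>x\<in>V. le x x) \<and>
     (\<forall>x\<in>V. \<forall>y\<in>V. le x y \<and> le y x \<longrightarrow> x = y) \<and>
     (\<forall>x\<in>V. \<forall>y\<in>V. \<forall>z\<in>V. le x y \<and> le y z \<longrightarrow> le x z)"

definition plt :: "'a set \<Rightarrow> ('a \<Rightarrow> 'a \<Rightarrow> bool) \<Rightarrow> 'a \<Rightarrow> 'a \<Rightarrow> bool" where
  "plt V le x y \<longleftrightarrow> x \<in> V \<and> y \<in> V \<and> le x y \<and> x \<noteq> y"

definition pcover :: "'a set \<Rightarrow> ('a \<Rightarrow> 'a \<Rightarrow> bool) \<Rightarrow> 'a \<Rightarrow> 'a \<Rightarrow> bool" where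
  "pcover V le x y \<longleftrightarrow> plt V le x y \<and> \<not> (\<exists>z\<in>V. plt V le x z \<and> plt V le z y)"

definition Diag :: "'a set \<Rightarrow> ('a \<Rightarrow> 'a \<Rightarrow> bool) \<Rightarrow> ('a \<times> 'a) set" where
  "Diag V le = {(x, y). pcover V le x y}"

definition Inc :: "'a set \<Rightarrow> ('a \<Rightarrow> 'a \<Rightarrow> bool) \<Rightarrow> ('a \<times> 'a) set" where
  "Inc V le = {(x, y). x \<in> V \<and> y \<in> V \<and> \<not> le x y \<and> \<not> le y x}"

definition Ndiag :: "'a set \<Rightarrow> ('a \<Rightarrow> 'a \<Rightarrow> bool) \<Rightarrow> ('a \<times> 'a) set" where
  "Ndiag V le = {(b, c). \<exists>a d. pcover V le b c \<and> pcover V le a c \<and> pcover V le b d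
                              \<and> (a, d) \<in> Inc V le}"

definition Aset :: "'a set \<Rightarrow> ('a \<Rightarrow> 'a \<Rightarrow> bool) \<Rightarrow> ('a \<times> 'a) set" where
  "Aset V le = {(b, c). (b, c) \<in> Diag V le - Ndiag V le \<and>
      (\<exists>a\<in>V. \<exists>d\<in>V. plt V le a c \<and> plt V le b d \<and> (a, b) \<in> Inc V le \<and> (c, d) \<in> Inc V le
         \<and> ((a, c) \<in> Ndiag V le \<or> (b, d) \<in> Ndiag V le))}"

text \<open>Vertices of S_N(P): old vertices, and a new dummy vertex New b c for each
  diagonal edge (b,c) of an N.\<close>
datatype 'a sn = Old 'a | New 'a 'a

definition SN_carrier :: "'a set \<Rightarrow> ('a \<Rightarrow> 'a \<Rightarrow> bool) \<Rightarrow> 'a sn set" where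
  "SN_carrier V le = Old ` V \<union> {New b c | b c. (b, c) \<in> Ndiag V le}"

text \<open>The order of S_N(P): the order generated by the order of P together with
  b < New b c < c, written out explicitly.\<close>
fun SN_le :: "('a \<Rightarrow> 'a \<Rightarrow> bool) \<Rightarrow> 'a sn \<Rightarrow> 'a sn \<Rightarrow> bool" where
  "SN_le le (Old x) (Old y) = le x y"
| "SN_le le (Old x) (New b c) = le x b"
| "SN_le le (New b c) (Old y) = le c y"
| "SN_le le (New b c) (New b' c') = ((b = b' \<and> c = c') \<or> le c b')"

end

theory Submission
  imports Defs
begin

text \<open>
  A vertex of \<open>S\<^sub>N(S\<^sub>N(P))\<close> outside \<open>P\<close> is a dummy vertex subdividing an edge
  \<open>b \<prec> c\<close> (of \<open>P\<close> or of \<open>S\<^sub>N(P)\<close>); everything above it lies above \<open>c\<close>, everything below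
  it below \<open>b\<close>. So a dummy vertex has a unique upper and a unique lower cover, and cannot be an
  end of the diagonal edge of an \<open>N\<close>. Hence a diagonal edge of \<open>P'\<close> is a cover \<open>b \<prec> c\<close>
  of \<open>P\<close>, and the two other vertices of its \<open>N\<close> are \<open>P\<close>-vertices \<open>a \<prec> c\<close>, \<open>b \<prec> d\<close> or
  dummies on such edges. If \<open>(b, c)\<close> is not already in \<open>N\<^sub>d\<^sub>i\<^sub>a\<^sub>g(P)\<close>, one of the edges
  \<open>(a, c)\<close>, \<open>(b, d)\<close> must carry a dummy, i.e. be a diagonal edge of \<open>P\<close> or of \<open>S\<^sub>N(P)\<close>. The
  first case gives \<open>(b, c) \<in> A(P)\<close> directly; in the second, the \<open>N\<close> of \<open>S\<^sub>N(P)\<close> on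
  \<open>(a, c)\<close> produces a diagonal edge of \<open>P\<close> witnessing \<open>(b, c) \<in> A(P)\<close>.

  Every step is self-dual: reversing the order of \<open>P\<close> and mirroring the dummy vertices is an
  anti-isomorphism of \<open>S\<^sub>N(P)\<close> and \<open>S\<^sub>N(S\<^sub>N(P))\<close>, so the statements about \<open>b \<prec> d\<close> are
  obtained from those about \<open>a \<prec> c\<close> by duality.
\<close>

lemma pcoverD: "pcover V le x y \<Longrightarrow> x \<in> V \<and> y \<in> V \<and> le x y \<and> x \<noteq> y"
  by (auto simp: pcover_def plt_def)

lemma pcover_not_between: "pcover V le x y \<Longrightarrow> plt V le x z \<Longrightarrow> plt V le z y \<Longrightarrow> False"
  unfolding pcover_def plt_def by blast

lemma Inc_sym: "(x, y) \<in> Inc V le \<Longrightarrow> (y, x) \<in> Inc V le"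
  unfolding Inc_def by blast

lemma NdiagI:
  "pcover V le b c \<Longrightarrow> pcover V le a c \<Longrightarrow> pcover V le b d \<Longrightarrow> (a, d) \<in> Inc V le
   \<Longrightarrow> (b, c) \<in> Ndiag V le"
  unfolding Ndiag_def by auto

lemma NdiagE:
  assumes "(b, c) \<in> Ndiag V le"
  obtains a d where "pcover V le b c" "pcover V le a c" "pcover V le b d" "(a, d) \<in> Inc V le"
  using assms unfolding Ndiag_def by auto

lemma Ndiag_pcover: "(b, c) \<in> Ndiag V le \<Longrightarrow> pcover V le b c"
  by (auto elim: NdiagE)

lemma AsetI:
  assumes "pcover V le b c" "(b, c) \<notin> Ndiag V le" "a \<in> V" "d \<in> V" "plt V le a c" "plt V le b d"
    "(a, b) \<in> Inc V le" "(c, d) \<in> Inc V le" "(a, c) \<in> Ndiag V le \<or> (b, d) \<in> Ndiag V le"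
  shows "(b, c) \<in> Aset V le"
  using assms unfolding Aset_def Diag_def by blast

section \<open>Order reversal\<close>

locale anti_iso =
  fixes f :: "'a \<Rightarrow> 'b" and le :: "'a \<Rightarrow> 'a \<Rightarrow> bool" and le' :: "'b \<Rightarrow> 'b \<Rightarrow> bool"
  assumes inj: "inj f" and le'_iff: "le' (f x) (f y) \<longleftrightarrow> le y x"
begin

lemma is_poset_image: "is_poset V le \<Longrightarrow> is_poset (f ` V) le'"
  unfolding is_poset_def ball_simps le'_iff inj_eq[OF inj] by blast

lemma plt_image: "plt (f ` V) le' (f x) (f y) \<longleftrightarrow> plt V le y x"
  unfolding plt_def by (auto simp: le'_iff inj_image_mem_iff[OF inj] inj_eq[OF inj])

lemma pcover_image: "pcover (f ` V) le' (f x) (f y) \<longleftrightarrow> pcover V le y x"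
  unfolding pcover_def by (auto simp: plt_image)

lemma Inc_image: "(f x, f y) \<in> Inc (f ` V) le' \<longleftrightarrow> (x, y) \<in> Inc V le"
  unfolding Inc_def by (auto simp: le'_iff inj_image_mem_iff[OF inj])

lemma Ndiag_image: "(f x, f y) \<in> Ndiag (f ` V) le' \<longleftrightarrow> (y, x) \<in> Ndiag V le"
proof
  assume "(f x, f y) \<in> Ndiag (f ` V) le'"
  then obtain a d where "pcover (f ` V) le' (f x) (f y)" "pcover (f ` V) le' a (f y)"
      "pcover (f ` V) le' (f x) d" "(a, d) \<in> Inc (f ` V) le'"
    by (rule NdiagE)
  moreover obtain a' d' where "a = f a'" "d = f d'"
    using \<open>(a, d) \<in> Inc (f ` V) le'\<close> unfolding Inc_def by blast
  ultimately show "(y, x) \<in> Ndiag V le"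
    by (auto simp: pcover_image Inc_image intro: NdiagI Inc_sym)
next
  assume "(y, x) \<in> Ndiag V le"
  then obtain a d where "pcover V le y x" "pcover V le a x" "pcover V le y d" "(a, d) \<in> Inc V le"
    by (rule NdiagE)
  then show "(f x, f y) \<in> Ndiag (f ` V) le'"
    by (intro NdiagI[of _ _ _ _ "f d" "f a"]) (auto simp: pcover_image Inc_image intro: Inc_sym)
qed

lemma Aset_image: "(f x, f y) \<in> Aset (f ` V) le' \<longleftrightarrow> (y, x) \<in> Aset V le"
  unfolding Aset_def Diag_def
  by (auto simp: pcover_image Ndiag_image plt_image Inc_image dest: Inc_sym)

end

lemma anti_iso_conversep: "anti_iso id le le\<inverse>\<inverse>"
  by unfold_locales (auto simp: inj_on_def)

lemma is_poset_conversep: "is_poset V le \<Longrightarrow> is_poset V le\<inverse>\<inverse>"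
  using anti_iso.is_poset_image[OF anti_iso_conversep] by simp

lemma plt_conversep: "plt V le\<inverse>\<inverse> x y \<longleftrightarrow> plt V le y x"
  using anti_iso.plt_image[OF anti_iso_conversep] by simp

lemma pcover_conversep: "pcover V le\<inverse>\<inverse> x y \<longleftrightarrow> pcover V le y x"
  using anti_iso.pcover_image[OF anti_iso_conversep] by simp

lemma Inc_conversep: "(x, y) \<in> Inc V le\<inverse>\<inverse> \<longleftrightarrow> (x, y) \<in> Inc V le"
  using anti_iso.Inc_image[OF anti_iso_conversep] by simp

lemma Ndiag_conversep: "(x, y) \<in> Ndiag V le\<inverse>\<inverse> \<longleftrightarrow> (y, x) \<in> Ndiag V le"
  using anti_iso.Ndiag_image[OF anti_iso_conversep] by simp

lemma Aset_conversep: "(x, y) \<in> Aset V le\<inverse>\<inverse> \<longleftrightarrow> (y, x) \<in> Aset V le"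
  using anti_iso.Aset_image[OF anti_iso_conversep] by simp

section \<open>Covers in finite posets\<close>

lemma lower_covers_Inc: "pcover V le a c \<Longrightarrow> pcover V le b c \<Longrightarrow> a \<noteq> b \<Longrightarrow> (a, b) \<in> Inc V le"
  unfolding pcover_def plt_def Inc_def by blast

lemma upper_covers_Inc: "pcover V le b c \<Longrightarrow> pcover V le b d \<Longrightarrow> c \<noteq> d \<Longrightarrow> (c, d) \<in> Inc V le"
  unfolding pcover_def plt_def Inc_def by blast

locale finite_poset =
  fixes V :: "'a set" and le :: "'a \<Rightarrow> 'a \<Rightarrow> bool"
  assumes finite: "finite V" and poset: "is_poset V le"
begin

lemma le_refl: "x \<in> V \<Longrightarrow> le x x"
  using poset unfolding is_poset_def by blast

lemma le_antisym: "x \<in> V \<Longrightarrow> y \<in> V \<Longrightarrow> le x y \<Longrightarrow> le y x \<Longrightarrow> x = y"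
  using poset unfolding is_poset_def by blast

lemma le_trans: "x \<in> V \<Longrightarrow> y \<in> V \<Longrightarrow> z \<in> V \<Longrightarrow> le x y \<Longrightarrow> le y z \<Longrightarrow> le x z"
  using poset unfolding is_poset_def by blast

lemma plt_trans: "plt V le x y \<Longrightarrow> plt V le y z \<Longrightarrow> plt V le x z"
  unfolding plt_def using le_trans[of x y z] le_antisym[of x y] by blast

lemma wf_plt: "wf {(x, y). plt V le x y}"
proof (rule finite_acyclic_wf)
  show "finite {(x, y). plt V le x y}"
    by (rule finite_subset[of _ "V \<times> V"]) (auto simp: plt_def finite)
  have "trans {(x, y). plt V le x y}"
    by (auto intro: transI plt_trans)
  then show "acyclic {(x, y). plt V le x y}"
    by (simp add: acyclic_def trancl_id plt_def)
qed

lemma exists_pcover_above: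
  assumes "plt V le x z"
  obtains y where "pcover V le x y" "le y z"
proof -
  obtain y where y: "y \<in> {y. plt V le x y \<and> le y z}"
      and min: "\<And>u. (u, y) \<in> {(x, y). plt V le x y} \<Longrightarrow> u \<notin> {y. plt V le x y \<and> le y z}"
    using wfE_min[OF wf_plt, of z "{y. plt V le x y \<and> le y z}"] assms le_refl
    by (auto simp: plt_def)
  have "pcover V le x y"
    unfolding pcover_def
  proof (intro conjI notI)
    show "plt V le x y"
      using y by simp
    assume "\<exists>u\<in>V. plt V le x u \<and> plt V le u y"
    then obtain u where u: "plt V le x u" "plt V le u y"
      by blast
    then have "le u z"
      using assms y le_trans[of u y z] unfolding plt_def by blast
    then show False
      using min[of u] u by blast
  qed
  with y show thesis
    using that by blast
qed

text \<open>Not a sublocale: \<open>le\<inverse>\<inverse>\<inverse>\<inverse>\<close> is not syntactically \<open>le\<close>, so the registration would not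
  terminate. The dual is interpreted locally where it is needed.\<close>

lemma dual_finite_poset: "finite_poset V le\<inverse>\<inverse>"
  using finite is_poset_conversep[OF poset] by unfold_locales

lemma exists_pcover_below:
  assumes "plt V le z x"
  obtains y where "pcover V le y x" "le z y"
proof -
  interpret dual: finite_poset V "le\<inverse>\<inverse>"
    by (rule dual_finite_poset)
  have "plt V le\<inverse>\<inverse> x z"
    using assms by (simp add: plt_conversep)
  then obtain y where "pcover V le\<inverse>\<inverse> x y" "le\<inverse>\<inverse> y z"
    by (rule dual.exists_pcover_above)
  then show thesis
    by (intro that) (simp_all add: pcover_conversep)
qed

lemma Ndiag_transfer_pcover:
  assumes ac: "pcover V le a c" and af: "pcover V le a f" and bc: "pcover V le b c"
    and ab: "(a, b) \<in> Inc V le" and acN: "(a, c) \<notin> Ndiag V le" and bcN: "(b, c) \<notin> Ndiag V le"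
  shows "pcover V le b f"
proof -
  have V: "a \<in> V" "b \<in> V" "c \<in> V" "f \<in> V"
    using ac af bc by (auto dest: pcoverD)
  have "(b, f) \<notin> Inc V le"
    using NdiagI[OF ac bc af] acN by blast
  moreover have "\<not> le f b"
    using af ab le_trans[of a f b] V by (auto dest: pcoverD simp: Inc_def)
  ultimately have bf: "plt V le b f"
    using af ab V by (auto dest: pcoverD simp: Inc_def plt_def)
  show ?thesis
    unfolding pcover_def
  proof (intro conjI notI bf)
    assume "\<exists>z\<in>V. plt V le b z \<and> plt V le z f"
    then obtain z where bz: "plt V le b z" and zf: "plt V le z f"
      by blast
    obtain z' where bz': "pcover V le b z'" and z'z: "le z' z"
      using exists_pcover_above[OF bz] .
    have "z' \<in> V"
      using bz' by (auto dest: pcoverD)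
    have "(a, z') \<notin> Inc V le"
      using NdiagI[OF bc ac bz'] bcN by blast
    moreover have "\<not> le z' a"
      using bz' ab le_trans[of b z' a] V \<open>z' \<in> V\<close> by (auto dest: pcoverD simp: Inc_def)
    moreover have "\<not> le a z'"
    proof
      assume "le a z'"
      moreover have "a \<noteq> z'"
        using bz' ab by (auto dest: pcoverD simp: Inc_def)
      moreover have "plt V le z' f"
        using plt_trans[of z' z f] zf z'z \<open>z' \<in> V\<close> le_antisym[of z' z] bz'
        unfolding plt_def by (metis pcoverD)
      ultimately show False
        using pcover_not_between[OF af] V \<open>z' \<in> V\<close> by (auto simp: plt_def)
    qed
    ultimately show False
      using V \<open>z' \<in> V\<close> by (auto simp: Inc_def)
  qed
qed

lemma Ndiag_transfer:
  assumes ac: "pcover V le a c" and af: "(a, f) \<in> Ndiag V le" and bc: "pcover V le b c"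
    and ab: "(a, b) \<in> Inc V le" and acN: "(a, c) \<notin> Ndiag V le" and bcN: "(b, c) \<notin> Ndiag V le"
  shows "(b, f) \<in> Ndiag V le" and "plt V le b f" and "(c, f) \<in> Inc V le"
proof -
  obtain g h where af': "pcover V le a f" and gf: "pcover V le g f" and ah: "pcover V le a h"
      and gh: "(g, h) \<in> Inc V le"
    using af by (rule NdiagE)
  have bf: "pcover V le b f"
    using Ndiag_transfer_pcover[OF ac af' bc ab acN bcN] .
  then show "plt V le b f"
    by (simp add: pcover_def)
  show cf: "(c, f) \<in> Inc V le"
    using upper_covers_Inc[OF ac af'] af acN by blast
  have V: "c \<in> V" "f \<in> V" "g \<in> V"
    using ac gf by (auto dest: pcoverD)
  have "(g, c) \<in> Inc V le"
  proof (rule ccontr)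
    assume "(g, c) \<notin> Inc V le"
    moreover have "\<not> le c g"
      using gf cf le_trans[of c g f] V by (auto dest: pcoverD simp: Inc_def)
    ultimately have "plt V le g c"
      using gf cf V by (auto dest: pcoverD simp: Inc_def plt_def)
    then obtain g' where g'c: "pcover V le g' c" and gg': "le g g'"
      by (rule exists_pcover_below)
    have "g' \<in> V"
      using g'c by (auto dest: pcoverD)
    have "(g', h) \<notin> Inc V le" "(g', f) \<notin> Inc V le"
      using NdiagI[OF ac g'c ah] NdiagI[OF ac g'c af'] acN by blast+
    moreover have "\<not> le f g'"
      using g'c cf le_trans[of f g' c] V \<open>g' \<in> V\<close> by (auto dest: pcoverD simp: Inc_def)
    ultimately have "plt V le g' f"
      using g'c cf V \<open>g' \<in> V\<close> by (auto dest: pcoverD simp: Inc_def plt_def)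
    then have "g = g'"
      using pcover_not_between[OF gf] gg' V \<open>g' \<in> V\<close> by (auto simp: plt_def)
    with gh \<open>(g', h) \<notin> Inc V le\<close> show False
      by simp
  qed
  then show "(b, f) \<in> Ndiag V le"
    using NdiagI[OF bf gf bc] by blast
qed

end

section \<open>The subdivision \<open>S\<^sub>N\<close>\<close>

lemma Old_in_SN_carrier [simp]: "Old x \<in> SN_carrier V le \<longleftrightarrow> x \<in> V"
  by (auto simp: SN_carrier_def)

lemma New_in_SN_carrier [simp]: "New b c \<in> SN_carrier V le \<longleftrightarrow> (b, c) \<in> Ndiag V le"
  by (auto simp: SN_carrier_def)

lemma Ndiag_other_upper_cover:
  assumes "(b, c) \<in> Ndiag V le"
  obtains d where "pcover V le b d" "d \<noteq> c"
proof -
  obtain a d where "pcover V le a c" "pcover V le b d" "(a, d) \<in> Inc V le"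
    using assms by (rule NdiagE)
  moreover from this have "d \<noteq> c"
    by (auto simp: Inc_def pcover_def plt_def)
  ultimately show thesis
    by (intro that)
qed

lemma Ndiag_other_lower_cover:
  assumes "(b, c) \<in> Ndiag V le"
  obtains a where "pcover V le a c" "a \<noteq> b"
proof -
  obtain a d where "pcover V le a c" "pcover V le b d" "(a, d) \<in> Inc V le"
    using assms by (rule NdiagE)
  moreover from this have "a \<noteq> b"
    by (auto simp: Inc_def pcover_def plt_def)
  ultimately show thesis
    by (intro that)
qed

lemma pcover_Old_Old: "pcover C (SN_le le) (Old x) (Old y) \<Longrightarrow> pcover {z. Old z \<in> C} le x y"
  unfolding pcover_def plt_def by force

lemma pcover_New_upper:
  assumes "pcover C (SN_le le) (New b c) Z" "Old c \<in> C" "le c c"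
  shows "Z = Old c"
proof (rule ccontr)
  assume "Z \<noteq> Old c"
  moreover have "SN_le le (Old c) Z"
    using assms(1) by (cases Z) (auto simp: pcover_def plt_def)
  ultimately show False
    using assms pcover_not_between[OF assms(1), of "Old c"] by (auto simp: plt_def dest: pcoverD)
qed

lemma pcover_New_lower:
  assumes "pcover C (SN_le le) X (New b c)" "Old b \<in> C" "le b b"
  shows "X = Old b"
proof (rule ccontr)
  assume "X \<noteq> Old b"
  moreover have "SN_le le X (Old b)"
    using assms(1) by (cases X) (auto simp: pcover_def plt_def)
  ultimately show False
    using assms pcover_not_between[OF assms(1), of "Old b"] by (auto simp: plt_def dest: pcoverD)
qed

lemma SN_Ndiag_Old:
  assumes refl: "\<And>x. x \<in> V \<Longrightarrow> le x x" and XY: "(X, Y) \<in> Ndiag (SN_carrier V le) (SN_le le)"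
  obtains x y where "X = Old x" "Y = Old y" "pcover V le x y"
proof -
  have "\<exists>x. X = Old x"
  proof (cases X)
    case (New b c)
    then have "(b, c) \<in> Ndiag V le"
      using pcoverD[OF Ndiag_pcover[OF XY]] by simp
    then have "Old c \<in> SN_carrier V le" "le c c"
      using pcoverD[OF Ndiag_pcover[OF \<open>(b, c) \<in> Ndiag V le\<close>]] refl by auto
    moreover obtain D where "pcover (SN_carrier V le) (SN_le le) X D" "D \<noteq> Y"
      using XY by (rule Ndiag_other_upper_cover)
    ultimately have "D = Old c" "Y = Old c"
      using pcover_New_upper[of "SN_carrier V le" le b c] Ndiag_pcover[OF XY] New by auto
    with \<open>D \<noteq> Y\<close> show ?thesis
      by simp
  qed simp
  moreover have "\<exists>y. Y = Old y"
  proof (cases Y)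
    case (New b c)
    then have "(b, c) \<in> Ndiag V le"
      using pcoverD[OF Ndiag_pcover[OF XY]] by simp
    then have "Old b \<in> SN_carrier V le" "le b b"
      using pcoverD[OF Ndiag_pcover[OF \<open>(b, c) \<in> Ndiag V le\<close>]] refl by auto
    moreover obtain A where "pcover (SN_carrier V le) (SN_le le) A Y" "A \<noteq> X"
      using XY by (rule Ndiag_other_lower_cover)
    ultimately have "A = Old b" "X = Old b"
      using pcover_New_lower[of "SN_carrier V le" le _ b c] Ndiag_pcover[OF XY] New by auto
    with \<open>A \<noteq> X\<close> show ?thesis
      by simp
  qed simp
  ultimately obtain x y where xy: "X = Old x" "Y = Old y"
    by blast
  then have "pcover V le x y"
    using pcover_Old_Old[of "SN_carrier V le" le x y] Ndiag_pcover[OF XY] by simp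
  with xy show thesis
    by (rule that)
qed

text \<open>\<open>S\<^sub>N\<close> commutes with reversing the order once each dummy vertex \<open>New b c\<close> is renamed
  \<open>New c b\<close>.\<close>

fun sn_flip :: "('a \<Rightarrow> 'b) \<Rightarrow> 'a sn \<Rightarrow> 'b sn" where
  "sn_flip f (Old x) = Old (f x)"
| "sn_flip f (New b c) = New (f c) (f b)"

lemma sn_flip_eq_Old_iff [simp]: "sn_flip f z = Old y \<longleftrightarrow> (\<exists>x. z = Old x \<and> f x = y)"
  by (cases z) auto

lemma inj_sn_flip: "inj f \<Longrightarrow> inj (sn_flip f)"
proof (rule injI)
  fix X Y assume "inj f" "sn_flip f X = sn_flip f Y"
  then show "X = Y"
    by (cases X; cases Y) (auto dest: injD)
qed

lemma anti_iso_SN: "anti_iso f le le' \<Longrightarrow> anti_iso (sn_flip f) (SN_le le) (SN_le le')"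
proof unfold_locales
  assume f: "anti_iso f le le'"
  then show "inj (sn_flip f)"
    by (simp add: anti_iso.inj inj_sn_flip)
  fix X Y
  show "SN_le le' (sn_flip f X) (sn_flip f Y) \<longleftrightarrow> SN_le le Y X"
    using anti_iso.le'_iff[OF f] inj_eq[OF anti_iso.inj[OF f]]
    by (cases X; cases Y) auto
qed

lemma (in anti_iso) SN_carrier_image: "SN_carrier (f ` V) le' = sn_flip f ` SN_carrier V le"
proof -
  have "{New b c |b c. (b, c) \<in> Ndiag (f ` V) le'}
      = sn_flip f ` {New b c |b c. (b, c) \<in> Ndiag V le}"
  proof safe
    fix b c assume bc: "(b, c) \<in> Ndiag (f ` V) le'"
    then obtain x y where "b = f x" "c = f y"
      using pcoverD[OF Ndiag_pcover[OF bc]] by blast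
    with bc show "New b c \<in> sn_flip f ` {New b c |b c. (b, c) \<in> Ndiag V le}"
      by (auto simp: Ndiag_image intro!: image_eqI[of _ _ "New y x"])
  qed (auto simp: Ndiag_image)
  then show ?thesis
    unfolding SN_carrier_def by (simp add: image_Un image_image)
qed

lemma SN_Ndiag_conversep:
  "(Old x, Old y) \<in> Ndiag (SN_carrier V le\<inverse>\<inverse>) (SN_le le\<inverse>\<inverse>)
    \<longleftrightarrow> (Old y, Old x) \<in> Ndiag (SN_carrier V le) (SN_le le)"
proof -
  interpret anti_iso "sn_flip id" "SN_le le" "SN_le le\<inverse>\<inverse>"
    by (rule anti_iso_SN[OF anti_iso_conversep])
  have "SN_carrier V le\<inverse>\<inverse> = sn_flip id ` SN_carrier V le"
    using anti_iso.SN_carrier_image[OF anti_iso_conversep, of V le] by simp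
  then show ?thesis
    using Ndiag_image[of "Old x" "Old y" "SN_carrier V le"] by simp
qed

context finite_poset begin

lemma SN_pcover_below_Old [consumes 1, case_names New Old]:
  assumes "pcover (SN_carrier V le) (SN_le le) A (Old c)"
  obtains (New) e where "A = New e c" "(e, c) \<in> Ndiag V le"
  | (Old) e where "A = Old e" "pcover V le e c"
proof (cases A)
  case (New e c')
  then have ec': "(e, c') \<in> Ndiag V le"
    using pcoverD[OF assms] by simp
  then have "c' = c"
    using pcover_New_upper[of "SN_carrier V le" le e c' "Old c"] assms New le_refl pcoverD[OF Ndiag_pcover[OF ec']]
    by auto
  then show thesis
    using that(1) New ec' by blast
next
  case (Old e)
  then show thesis
    using that(2) pcover_Old_Old[OF assms[unfolded Old]] by simp
qed

lemma SN_pcover_above_Old [consumes 1, case_names New Old]: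
  assumes "pcover (SN_carrier V le) (SN_le le) (Old a) D"
  obtains (New) f where "D = New a f" "(a, f) \<in> Ndiag V le"
  | (Old) f where "D = Old f" "pcover V le a f"
proof (cases D)
  case (New a' f)
  then have af': "(a', f) \<in> Ndiag V le"
    using pcoverD[OF assms] by simp
  then have "a = a'"
    using pcover_New_lower[of "SN_carrier V le" le "Old a" a' f] assms New le_refl pcoverD[OF Ndiag_pcover[OF af']]
    by auto
  then show thesis
    using that(1) New af' by blast
next
  case (Old f)
  then show thesis
    using that(2) pcover_Old_Old[OF assms[unfolded Old]] by simp
qed

lemma Aset_of_SN_Ndiag_left:
  assumes bc: "pcover V le b c" and bcN: "(b, c) \<notin> Ndiag V le"
    and ac: "pcover V le a c" and ab: "(a, b) \<in> Inc V le"
    and bd: "pcover V le b d" and cd: "(c, d) \<in> Inc V le"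
    and acN: "(a, c) \<notin> Ndiag V le"
    and acSN: "(Old a, Old c) \<in> Ndiag (SN_carrier V le) (SN_le le)"
  shows "(b, c) \<in> Aset V le"
proof -
  obtain A D where Ac: "pcover (SN_carrier V le) (SN_le le) A (Old c)"
      and aD: "pcover (SN_carrier V le) (SN_le le) (Old a) D"
      and AD: "(A, D) \<in> Inc (SN_carrier V le) (SN_le le)"
    using acSN by (rule NdiagE)
  have "plt V le a c" "plt V le b d"
    using ac bd by (simp_all add: pcover_def)
  from Ac show ?thesis
  proof (cases rule: SN_pcover_below_Old)
    case (New e)
    then have "(e, b) \<in> Inc V le"
      using lower_covers_Inc[OF Ndiag_pcover bc] bcN by blast
    with New show ?thesis
      using AsetI[OF bc bcN _ _ _ \<open>plt V le b d\<close> _ cd] pcoverD[OF Ndiag_pcover[OF New(2)]]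
        pcoverD[OF bd] by (auto simp: plt_def)
  next
    case (Old e)
    from aD show ?thesis
    proof (cases rule: SN_pcover_above_Old)
      case (New f)
      note transfer = Ndiag_transfer[OF ac New(2) bc ab acN bcN]
      show ?thesis
        using AsetI[OF bc bcN _ _ \<open>plt V le a c\<close> transfer(2) ab transfer(3)] transfer(1)
          pcoverD[OF ac] pcoverD[OF Ndiag_pcover[OF New(2)]] by blast
    next
      case (Old f)
      then have "(e, f) \<in> Inc V le"
        using AD \<open>A = Old e\<close> by (simp add: Inc_def)
      then have "(a, c) \<in> Ndiag V le"
        using NdiagI[OF ac \<open>pcover V le e c\<close> \<open>pcover V le a f\<close>] by blast
      with acN show ?thesis
        by blast
    qed
  qed
qed

lemma Aset_of_SN_Ndiag_right:
  assumes bc: "pcover V le b c" and bcN: "(b, c) \<notin> Ndiag V le"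
    and ac: "pcover V le a c" and ab: "(a, b) \<in> Inc V le"
    and bd: "pcover V le b d" and cd: "(c, d) \<in> Inc V le"
    and bdN: "(b, d) \<notin> Ndiag V le"
    and bdSN: "(Old b, Old d) \<in> Ndiag (SN_carrier V le) (SN_le le)"
  shows "(b, c) \<in> Aset V le"
proof -
  interpret dual: finite_poset V "le\<inverse>\<inverse>"
    by (rule dual_finite_poset)
  have "(c, b) \<in> Aset V le\<inverse>\<inverse>"
  proof (rule dual.Aset_of_SN_Ndiag_left)
    show "(d, c) \<in> Inc V le\<inverse>\<inverse>" "(b, a) \<in> Inc V le\<inverse>\<inverse>"
      using Inc_sym[OF cd] Inc_sym[OF ab] by (simp_all add: Inc_conversep)
  qed (use assms in \<open>simp_all add: pcover_conversep Ndiag_conversep SN_Ndiag_conversep\<close>)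
  then show ?thesis
    by (simp add: Aset_conversep)
qed

lemma Aset_of_subdivided_edge:
  assumes bc: "pcover V le b c" and bcN: "(b, c) \<notin> Ndiag V le"
    and ac: "pcover V le a c" "a \<noteq> b" and bd: "pcover V le b d" "d \<noteq> c"
    and subdivided: "(a, c) \<in> Ndiag V le \<or> (Old a, Old c) \<in> Ndiag (SN_carrier V le) (SN_le le)
      \<or> (b, d) \<in> Ndiag V le \<or> (Old b, Old d) \<in> Ndiag (SN_carrier V le) (SN_le le)"
  shows "(b, c) \<in> Aset V le"
proof -
  have ab: "(a, b) \<in> Inc V le"
    using lower_covers_Inc[OF ac(1) bc ac(2)] .
  have cd: "(c, d) \<in> Inc V le"
    using upper_covers_Inc[OF bc bd(1)] bd(2) by blast
  show ?thesis
  proof (cases "(a, c) \<in> Ndiag V le \<or> (b, d) \<in> Ndiag V le")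
    case True
    moreover have "plt V le a c" "plt V le b d"
      using ac bd by (simp_all add: pcover_def)
    ultimately show ?thesis
      using AsetI[OF bc bcN _ _ _ _ ab cd] pcoverD[OF ac(1)] pcoverD[OF bd(1)] by blast
  next
    case False
    then show ?thesis
      using subdivided Aset_of_SN_Ndiag_left[OF bc bcN ac(1) ab bd(1) cd]
        Aset_of_SN_Ndiag_right[OF bc bcN ac(1) ab bd(1) cd] by blast
  qed
qed

end

section \<open>Subposets of \<open>S\<^sub>N(S\<^sub>N(P))\<close> containing \<open>P\<close>\<close>

abbreviation sn_flip2 :: "'a sn sn \<Rightarrow> 'a sn sn" where
  "sn_flip2 \<equiv> sn_flip (sn_flip id)"

locale SN2_subposet = finite_poset +
  fixes W :: "'a sn sn set"
  assumes OO_subset: "(Old \<circ> Old) ` V \<subseteq> W"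
    and subset_SN2: "W \<subseteq> SN_carrier (SN_carrier V le) (SN_le le)"
begin

abbreviation le2 :: "'a sn sn \<Rightarrow> 'a sn sn \<Rightarrow> bool" where
  "le2 \<equiv> SN_le (SN_le le)"

lemma OO_in_W [simp]: "Old (Old x) \<in> W \<longleftrightarrow> x \<in> V"
  using OO_subset subset_SN2 by auto

lemma W_cases [consumes 1]:
  assumes "z \<in> W"
  obtains (Old_Old) x where "x \<in> V" "z = Old (Old x)"
  | (Old_New) b c where "z = Old (New b c)" "(b, c) \<in> Ndiag V le"
  | (New_Old) a c where "z = New (Old a) (Old c)" "(Old a, Old c) \<in> Ndiag (SN_carrier V le) (SN_le le)"
proof (cases z)
  case (Old Z)
  then show thesis
    using assms subset_SN2 that by (cases Z) auto
next
  case (New X Y)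
  then have "(X, Y) \<in> Ndiag (SN_carrier V le) (SN_le le)"
    using assms subset_SN2 by auto
  then show thesis
    using New that(3) le_refl by (auto elim: SN_Ndiag_Old)
qed

lemma pcover_OO: "pcover W le2 (Old (Old x)) (Old (Old y)) \<Longrightarrow> pcover V le x y"
  using pcover_Old_Old[OF pcover_Old_Old[of W "SN_le le" "Old x" "Old y"]] by simp

lemma pcover_Old_New_upper:
  assumes bc: "(b, c) \<in> Ndiag V le" and cover: "pcover W le2 (Old (New b c)) Z"
  shows "Z = Old (Old c)"
proof (cases Z)
  case (Old Z')
  have "c \<in> V"
    using pcoverD[OF Ndiag_pcover[OF bc]] by simp
  moreover have "pcover {X. Old X \<in> W} (SN_le le) (New b c) Z'"
    using pcover_Old_Old cover Old by simp
  ultimately show ?thesis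
    using pcover_New_upper[of "{X. Old X \<in> W}" le b c Z'] Old le_refl by simp
next
  case (New X Y)
  have "Z \<in> W"
    using pcoverD[OF cover] by simp
  then obtain a where "X = Old a"
    using New by (cases rule: W_cases) auto
  then have "plt W le2 (Old (New b c)) (Old (Old c))" "plt W le2 (Old (Old c)) Z"
    using pcoverD[OF cover] pcoverD[OF Ndiag_pcover[OF bc]] New le_refl by (auto simp: plt_def)
  then show ?thesis
    using pcover_not_between[OF cover] by blast
qed

lemma pcover_New_Old_upper:
  assumes ac: "(Old a, Old c) \<in> Ndiag (SN_carrier V le) (SN_le le)"
    and cover: "pcover W le2 (New (Old a) (Old c)) Z"
  shows "Z = Old (Old c)"
proof -
  have "c \<in> V"
    using pcoverD[OF Ndiag_pcover[OF ac]] by simp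
  then show ?thesis
    using pcover_New_upper[OF cover] le_refl by simp
qed

lemma Ndiag_fst_OO:
  assumes BC: "(B, C) \<in> Ndiag W le2"
  obtains b where "B = Old (Old b)"
proof -
  obtain D where BD: "pcover W le2 B D" and "D \<noteq> C"
    using BC by (rule Ndiag_other_upper_cover)
  have BC': "pcover W le2 B C"
    using BC by (rule Ndiag_pcover)
  have "B \<in> W"
    using pcoverD[OF BD] by simp
  then show thesis
  proof (cases rule: W_cases)
    case (Old_New b c)
    then show thesis
      using pcover_Old_New_upper[of b c] BD BC' \<open>D \<noteq> C\<close> by blast
  next
    case (New_Old a c)
    then show thesis
      using pcover_New_Old_upper[of a c] BD BC' \<open>D \<noteq> C\<close> by blast
  qed (rule that)
qed

lemma anti_iso_sn_flip2: "anti_iso sn_flip2 le2 (SN_le (SN_le le\<inverse>\<inverse>))"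
  by (intro anti_iso_SN anti_iso_conversep)

lemma dual_SN2: "SN2_subposet V le\<inverse>\<inverse> (sn_flip2 ` W)"
proof -
  interpret flip1: anti_iso "sn_flip id" "SN_le le" "SN_le le\<inverse>\<inverse>"
    by (intro anti_iso_SN anti_iso_conversep)
  have "SN_carrier V le\<inverse>\<inverse> = sn_flip id ` SN_carrier V le"
    using anti_iso.SN_carrier_image[OF anti_iso_conversep, of V le] by simp
  then have carrier: "SN_carrier (SN_carrier V le\<inverse>\<inverse>) (SN_le le\<inverse>\<inverse>)
      = sn_flip2 ` SN_carrier (SN_carrier V le) (SN_le le)"
    by (simp add: flip1.SN_carrier_image)
  show ?thesis
  proof (rule SN2_subposet.intro[OF dual_finite_poset], unfold_locales)
    show "(Old \<circ> Old) ` V \<subseteq> sn_flip2 ` W"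
    proof
      fix z assume "z \<in> (Old \<circ> Old) ` V"
      then obtain x where "x \<in> V" "z = Old (Old x)"
        by auto
      then show "z \<in> sn_flip2 ` W"
        using image_eqI[of z sn_flip2 "Old (Old x)" W] by simp
    qed
    show "sn_flip2 ` W \<subseteq> SN_carrier (SN_carrier V le\<inverse>\<inverse>) (SN_le le\<inverse>\<inverse>)"
      unfolding carrier using subset_SN2 by (rule image_mono)
  qed
qed

lemma Ndiag_snd_OO:
  assumes BC: "(B, C) \<in> Ndiag W le2"
  obtains c where "C = Old (Old c)"
proof -
  interpret dual: SN2_subposet V "le\<inverse>\<inverse>" "sn_flip2 ` W"
    by (rule dual_SN2)
  interpret flip2: anti_iso sn_flip2 le2 "SN_le (SN_le le\<inverse>\<inverse>)"
    by (rule anti_iso_sn_flip2)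
  have "(sn_flip2 C, sn_flip2 B) \<in> Ndiag (sn_flip2 ` W) (SN_le (SN_le le\<inverse>\<inverse>))"
    using BC by (simp add: flip2.Ndiag_image)
  then obtain c where "sn_flip2 C = Old (Old c)"
    by (rule dual.Ndiag_fst_OO)
  then have "C = Old (Old c)"
    by auto
  then show thesis
    by (rule that)
qed

lemma lower_cover_of_OO:
  assumes BC: "pcover W le2 (Old (Old b)) (Old (Old c))" and bcN: "(b, c) \<notin> Ndiag V le"
    and AC: "pcover W le2 A (Old (Old c))" and AB: "A \<noteq> Old (Old b)"
  obtains a where "pcover V le a c" "a \<noteq> b"
    "A = Old (Old a) \<or> (a, c) \<in> Ndiag V le \<or> (Old a, Old c) \<in> Ndiag (SN_carrier V le) (SN_le le)"
proof -
  have "A \<in> W"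
    using pcoverD[OF AC] by simp
  then show thesis
  proof (cases rule: W_cases)
    case (Old_Old a)
    then have "pcover V le a c" "a \<noteq> b"
      using pcover_OO AC AB by simp_all
    then show thesis
      using that Old_Old(2) by blast
  next
    case (Old_New a c')
    then have ac: "(a, c) \<in> Ndiag V le"
      using pcover_Old_New_upper[of a c' "Old (Old c)"] AC by simp
    then show thesis
      using that[OF Ndiag_pcover[OF ac]] bcN by blast
  next
    case (New_Old a c')
    then have ac: "(Old a, Old c) \<in> Ndiag (SN_carrier V le) (SN_le le)"
      using pcover_New_Old_upper[of a c' "Old (Old c)"] AC by simp
    have "a \<noteq> b"
    proof
      assume "a = b"
      then have "plt W le2 (Old (Old b)) A" "plt W le2 A (Old (Old c))"
        using New_Old pcoverD[OF AC] pcoverD[OF BC] le_refl by (auto simp: plt_def)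
      then show False
        using pcover_not_between[OF BC] by blast
    qed
    moreover obtain x y where "Old a = Old x" "Old c = Old y" "pcover V le x y"
      using le_refl ac by (rule SN_Ndiag_Old)
    then have "pcover V le a c"
      by simp
    ultimately show thesis
      using that ac by blast
  qed
qed

lemma upper_cover_of_OO:
  assumes BC: "pcover W le2 (Old (Old b)) (Old (Old c))" and bcN: "(b, c) \<notin> Ndiag V le"
    and BD: "pcover W le2 (Old (Old b)) D" and DC: "D \<noteq> Old (Old c)"
  obtains d where "pcover V le b d" "d \<noteq> c"
    "D = Old (Old d) \<or> (b, d) \<in> Ndiag V le \<or> (Old b, Old d) \<in> Ndiag (SN_carrier V le) (SN_le le)"
proof -
  interpret dual: SN2_subposet V "le\<inverse>\<inverse>" "sn_flip2 ` W"
    by (rule dual_SN2)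
  interpret flip2: anti_iso sn_flip2 le2 dual.le2
    by (rule anti_iso_sn_flip2)
  have "pcover (sn_flip2 ` W) dual.le2 (Old (Old c)) (Old (Old b))"
    using flip2.pcover_image[of W "Old (Old c)" "Old (Old b)"] BC by simp
  moreover have "(c, b) \<notin> Ndiag V le\<inverse>\<inverse>"
    using bcN by (simp add: Ndiag_conversep)
  moreover have "pcover (sn_flip2 ` W) dual.le2 (sn_flip2 D) (Old (Old b))"
    using flip2.pcover_image[of W D "Old (Old b)"] BD by simp
  moreover have "sn_flip2 D \<noteq> Old (Old c)"
    using DC by auto
  ultimately obtain d where "pcover V le\<inverse>\<inverse> d b" "d \<noteq> c"
    and d: "sn_flip2 D = Old (Old d) \<or> (d, b) \<in> Ndiag V le\<inverse>\<inverse>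
      \<or> (Old d, Old b) \<in> Ndiag (SN_carrier V le\<inverse>\<inverse>) (SN_le le\<inverse>\<inverse>)"
    by (rule dual.lower_cover_of_OO)
  have "sn_flip2 D = Old (Old d) \<longleftrightarrow> D = Old (Old d)"
    by auto
  with d have "D = Old (Old d) \<or> (b, d) \<in> Ndiag V le
      \<or> (Old b, Old d) \<in> Ndiag (SN_carrier V le) (SN_le le)"
    by (simp only: Ndiag_conversep SN_Ndiag_conversep)
  moreover have "pcover V le b d"
    using \<open>pcover V le\<inverse>\<inverse> d b\<close> by (simp only: pcover_conversep)
  ultimately show thesis
    using \<open>d \<noteq> c\<close> that by blast
qed

lemma Ndiag_OO_in_Ndiag_or_Aset:
  assumes "(Old (Old b), Old (Old c)) \<in> Ndiag W le2"
  shows "(b, c) \<in> Ndiag V le \<union> Aset V le"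
proof (cases "(b, c) \<in> Ndiag V le")
  case bcN: False
  obtain A D where BC: "pcover W le2 (Old (Old b)) (Old (Old c))" and AC: "pcover W le2 A (Old (Old c))"
      and BD: "pcover W le2 (Old (Old b)) D" and AD: "(A, D) \<in> Inc W le2"
    using assms by (rule NdiagE)
  have bc: "pcover V le b c"
    using BC by (rule pcover_OO)
  have "A \<noteq> Old (Old b)" "D \<noteq> Old (Old c)"
    using AD BD AC by (auto simp: Inc_def pcover_def plt_def)
  then obtain a d where ac: "pcover V le a c" "a \<noteq> b"
      and a: "A = Old (Old a) \<or> (a, c) \<in> Ndiag V le \<or> (Old a, Old c) \<in> Ndiag (SN_carrier V le) (SN_le le)"
      and bd: "pcover V le b d" "d \<noteq> c"
      and d: "D = Old (Old d) \<or> (b, d) \<in> Ndiag V le \<or> (Old b, Old d) \<in> Ndiag (SN_carrier V le) (SN_le le)"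
    using lower_cover_of_OO[OF BC bcN AC] upper_cover_of_OO[OF BC bcN BD] by metis
  have "\<not> (A = Old (Old a) \<and> D = Old (Old d))"
  proof
    assume "A = Old (Old a) \<and> D = Old (Old d)"
    then have "(a, d) \<in> Inc V le"
      using AD by (simp add: Inc_def)
    then show False
      using NdiagI[OF bc ac(1) bd(1)] bcN by blast
  qed
  then show ?thesis
    using Aset_of_subdivided_edge[OF bc bcN ac bd] a d by blast
qed simp

end

theorem lemma5:
  fixes V :: "'a set" and le :: "'a \<Rightarrow> 'a \<Rightarrow> bool" and W :: "'a sn sn set"
  assumes "finite V"
    and "is_poset V le"
    and "(Old \<circ> Old) ` V \<subseteq> W"
    and "W \<subseteq> SN_carrier (SN_carrier V le) (SN_le le)"
  shows "Ndiag W (SN_le (SN_le le))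
           \<subseteq> (\<lambda>(b, c). (Old (Old b), Old (Old c))) ` (Ndiag V le \<union> Aset V le)"
proof
  interpret SN2_subposet V le W
    by unfold_locales (rule assms)+
  fix p assume p: "p \<in> Ndiag W (SN_le (SN_le le))"
  obtain B C where BC: "p = (B, C)"
    by fastforce
  obtain b c where "B = Old (Old b)" "C = Old (Old c)"
    using Ndiag_fst_OO Ndiag_snd_OO p BC by metis
  with p BC show "p \<in> (\<lambda>(b, c). (Old (Old b), Old (Old c))) ` (Ndiag V le \<union> Aset V le)"
    using Ndiag_OO_in_Ndiag_or_Aset by force
qed

end
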